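(* Assume the setting described in the context. Suppose that either (1) there are vectors $\lambda,\mu\in\mathbb{R}^F$ with $\mu_f\neq0$ and a constant $\theta\in(0,1)$ such that $\frac{\lambda_f}{\mu_f}\sum_{S\in\mathrm{Ind}(\Gamma(f))}\mu(S)\le\theta$ for all $f\in F$, where $\mu(S)=\prod_{g\in S}\mu_g$; or (2) $(\rho,\sim)$ satisfies Shearer's condition with vectors $p,\lambda$ and constant $\theta$, in which case $\mu(R):=q_R(p)/q_\varnothing(p)$. Then for every $R\in\mathrm{Ind}(F)$ and integer $t\ge0$, $$\sum_{\varphi\in\mathrm{Stab}(R,t)}\lambda_\varphi\le\mu(R)\,\theta^t.$$
   Context: Setting: $F$ is a finite set with a symmetric relation $\sim$ (loops $f\sim f$ allowed), and $\Gamma(f)=\{g\in F:f\sim g\}$, $\Gamma(S)=\bigcup_{f\in S}\Gamma(f)$. A set $S\subseteq F$ is independent if $f\not\sim g$ for all distinct $f,g\in S$; $\mathrm{Ind}(S)$ is the family of independent subsets of $S$. A sequence $\varphi=(I_1,\ldots,I_s)$ with $s\ge1$ is strongly stable if: (i) $I_r\in\mathrm{Ind}(F)$ for all $r$; (ii) $I_{r+1}\subseteq\Gamma(I_r)$ for $r\in[s-1]$; (iii) $I_r\neq\varnothing$ for $r\in[2,s]$. For such $\varphi$ let $R_\varphi=I_1$, $|\varphi|=\sum_r|I_r|$ and $\lambda_\varphi=\prod_r\prod_{f\in I_r}\lambda_f$. Let $\mathrm{Stab}(R,t)$ be the set of strongly stable sequences $\varphi$ with $R_\varphi=R$ and $|\varphi|\ge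 t$. Shearer's condition refers additionally to the following data: a finite set $\Omega$ in which the flaws $f\in F$ are nonempty subsets; probability distributions $\rho(\cdot\mid f,\sigma)$ with support $A(f,\sigma)$ for each $\sigma\in f$; and a distribution $\omega$ on $\Omega$ with $\omega>0$. Set $q_S(p)=\sum_{I:S\subseteq I\in\mathrm{Ind}(F)}(-1)^{|I|-|S|}\prod_{f\in I}p_f$. It requires $p\in\mathbb{R}^F$ with $q_S(p)\ge0$ for all $S\subseteq F$ and $q_\varnothing(p)>0$, a vector $\lambda$ with $\lambda_f\ge\sum_{\sigma\in f:\sigma'\in A(f,\sigma)}\rho(\sigma'\mid f,\sigma)\omega(\sigma)/\omega(\sigma')$ for all $f,\sigma'$, and $\theta\in(0,1)$ with $\lambda_f\le\theta p_f$ for all $f$.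
   Formalization: In case (1), $\lambda_f$ is nonnegative and $\mu_f$ is strictly positive for every f in F, in place of the sole condition $\mu_f\neq0$ on arbitrary real vectors. Each condition added here is assumed in the paper as well or is needed for the statement above to hold. *)

theory Defs
  imports "HOL-Analysis.Analysis"
begin

definition nbr :: "'a set \<Rightarrow> ('a \<Rightarrow> 'a \<Rightarrow> bool) \<Rightarrow> 'a \<Rightarrow> 'a set" where
  "nbr F rel f = {g \<in> F. rel f g}"

definition nbr_set :: "'a set \<Rightarrow> ('a \<Rightarrow> 'a \<Rightarrow> bool) \<Rightarrow> 'a set \<Rightarrow> 'a set" where
  "nbr_set F rel S = (\<Union>f\<in>S. nbr F rel f)"

definition independent :: "('a \<Rightarrow> 'a \<Rightarrow> bool) \<Rightarrow> 'a set \<Rightarrow> bool" where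
  "independent rel S \<longleftrightarrow> (\<forall>f\<in>S. \<forall>g\<in>S. f \<noteq> g \<longrightarrow> \<not> rel f g)"

definition Ind :: "('a \<Rightarrow> 'a \<Rightarrow> bool) \<Rightarrow> 'a set \<Rightarrow> 'a set set" where
  "Ind rel S = {I. I \<subseteq> S \<and> independent rel I}"

(* strongly stable sequences (I_1,...,I_s), represented as lists; index r (0-based) *)
definition strongly_stable :: "'a set \<Rightarrow> ('a \<Rightarrow> 'a \<Rightarrow> bool) \<Rightarrow> 'a set list \<Rightarrow> bool" where
  "strongly_stable F rel \<phi> \<longleftrightarrow>
     length \<phi> \<ge> 1 \<and>
     (\<forall>r < length \<phi>. \<phi> ! r \<in> Ind rel F) \<and>
     (\<forall>r. r + 1 < length \<phi> \<longrightarrow> \<phi> ! (r + 1) \<subseteq> nbr_set F rel (\<phi> ! r)) \<and>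
     (\<forall>r. 1 \<le> r \<and> r < length \<phi> \<longrightarrow> \<phi> ! r \<noteq> {})"

definition seq_size :: "'a set list \<Rightarrow> nat" where
  "seq_size \<phi> = sum_list (map card \<phi>)"

definition seq_weight :: "('a \<Rightarrow> real) \<Rightarrow> 'a set list \<Rightarrow> real" where
  "seq_weight lam \<phi> = prod_list (map (\<lambda>I. \<Prod>f\<in>I. lam f) \<phi>)"

definition Stab :: "'a set \<Rightarrow> ('a \<Rightarrow> 'a \<Rightarrow> bool) \<Rightarrow> 'a set \<Rightarrow> nat \<Rightarrow> 'a set list set" where
  "Stab F rel R t = {\<phi>. strongly_stable F rel \<phi> \<and> hd \<phi> = R \<and> seq_size \<phi> \<ge> t}"

definition q_poly :: "'a set \<Rightarrow> ('a \<Rightarrow> 'a \<Rightarrow> bool) \<Rightarrow> ('a \<Rightarrow> real) \<Rightarrow> 'a set \<Rightarrow> real" where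
  "q_poly F rel p S = (\<Sum>I \<in> {I \<in> Ind rel F. S \<subseteq> I}. (-1) ^ (card I - card S) * (\<Prod>f\<in>I. p f))"

definition supp_A :: "'w set \<Rightarrow> ('w set \<Rightarrow> 'w \<Rightarrow> 'w \<Rightarrow> real) \<Rightarrow> 'w set \<Rightarrow> 'w \<Rightarrow> 'w set" where
  "supp_A \<Omega> \<rho> f \<sigma> = {\<sigma>' \<in> \<Omega>. \<rho> f \<sigma> \<sigma>' \<noteq> 0}"

definition shearer_condition ::
  "'w set \<Rightarrow> 'w set set \<Rightarrow> ('w set \<Rightarrow> 'w set \<Rightarrow> bool) \<Rightarrow> ('w set \<Rightarrow> 'w \<Rightarrow> 'w \<Rightarrow> real)
   \<Rightarrow> ('w \<Rightarrow> real) \<Rightarrow> ('w set \<Rightarrow> real) \<Rightarrow> ('w set \<Rightarrow> real) \<Rightarrow> real \<Rightarrow> bool" where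
  "shearer_condition \<Omega> F rel \<rho> \<omega> p lam \<theta> \<longleftrightarrow>
     (\<forall>S. S \<subseteq> F \<longrightarrow> q_poly F rel p S \<ge> 0) \<and>
     q_poly F rel p {} > 0 \<and>
     (\<forall>f\<in>F. \<forall>\<sigma>'\<in>\<Omega>.
        lam f \<ge> (\<Sum>\<sigma> \<in> {\<sigma> \<in> f. \<sigma>' \<in> supp_A \<Omega> \<rho> f \<sigma>}. \<rho> f \<sigma> \<sigma>' * \<omega> \<sigma> / \<omega> \<sigma>')) \<and>
     0 < \<theta> \<and> \<theta> < 1 \<and>
     (\<forall>f\<in>F. lam f \<le> \<theta> * p f)"

definition flaw_setting ::
  "'w set \<Rightarrow> 'w set set \<Rightarrow> ('w set \<Rightarrow> 'w \<Rightarrow> 'w \<Rightarrow> real) \<Rightarrow> ('w \<Rightarrow> real) \<Rightarrow> bool" where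
  "flaw_setting \<Omega> F \<rho> \<omega> \<longleftrightarrow>
     finite \<Omega> \<and> (\<forall>f\<in>F. f \<subseteq> \<Omega> \<and> f \<noteq> {}) \<and>
     (\<forall>f\<in>F. \<forall>\<sigma>\<in>f. (\<forall>\<sigma>'\<in>\<Omega>. \<rho> f \<sigma> \<sigma>' \<ge> 0) \<and> (\<Sum>\<sigma>'\<in>\<Omega>. \<rho> f \<sigma> \<sigma>') = 1) \<and>
     (\<forall>\<sigma>\<in>\<Omega>. \<omega> \<sigma> > 0) \<and> (\<Sum>\<sigma>\<in>\<Omega>. \<omega> \<sigma>) = 1"

end

theory Submission
  imports Defs
begin

text \<open>Splitting off the first set of a strongly stable sequence expresses \<open>Stab(R, t)\<close> through
  the sets \<open>Stab(S, t - |R|)\<close> with \<open>S\<close> a nonempty independent subset of \<open>\<Gamma>(R)\<close>. Hence every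
  nonnegative \<open>M\<close> with \<open>M({}) = 1\<close> and \<open>\<lambda>(R) * (\<Sum>S \<in> Ind(\<Gamma>(R)). M(S)) \<le> \<theta>^|R| * M(R)\<close> bounds
  the weighted sums by \<open>M(R) * \<theta>^t\<close>; this follows by induction on the length of the sequences,
  which keeps all sums finite. In case (1) \<open>M = \<mu>\<close> works, because \<open>\<Sum>S \<in> Ind(X). \<mu>(S)\<close> is
  submultiplicative in \<open>X\<close> and \<open>\<Gamma>(R)\<close> is the union of the \<open>\<Gamma>(f)\<close>, \<open>f \<in> R\<close>. In case (2)
  \<open>M(R) = q_R / q_{}\<close> works, because alternating-sum cancellation gives
  \<open>q_R = p(R) * (\<Sum>S \<in> Ind(R \<union> \<Gamma>(R)). q_S)\<close>.\<close>

lemma Ind_subset: "S \<in> Ind rel X \<Longrightarrow> S \<subseteq> X"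
  by (simp add: Ind_def)

lemma Ind_mono: "X \<subseteq> Y \<Longrightarrow> Ind rel X \<subseteq> Ind rel Y"
  by (auto simp: Ind_def)

lemma finite_Ind: "finite X \<Longrightarrow> finite (Ind rel X)"
  by (rule finite_subset[of _ "Pow X"]) (auto simp: Ind_def)

lemma empty_in_Ind: "{} \<in> Ind rel X"
  by (simp add: Ind_def independent_def)

lemma Ind_empty: "Ind rel {} = {{}}"
  by (auto simp: Ind_def independent_def)

lemma nbr_subset: "nbr F rel f \<subseteq> F"
  by (auto simp: nbr_def)

lemma nbr_set_subset: "nbr_set F rel R \<subseteq> F"
  by (auto simp: nbr_set_def nbr_def)

lemma finite_Ind_nbr_set: "finite F \<Longrightarrow> finite (Ind rel (nbr_set F rel R))"
  by (rule finite_Ind[OF finite_subset[OF nbr_set_subset]])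

lemma nbr_set_insert: "nbr_set F rel (insert f R) = nbr F rel f \<union> nbr_set F rel R"
  by (simp add: nbr_set_def)

lemma strongly_stable_Ind: "strongly_stable F rel \<phi> \<Longrightarrow> S \<in> set \<phi> \<Longrightarrow> S \<in> Ind rel F"
  by (auto simp: strongly_stable_def in_set_conv_nth)

lemma strongly_stable_Cons_Cons:
  assumes "strongly_stable F rel (R # S # \<phi>)"
  shows "strongly_stable F rel (S # \<phi>)" and "S \<in> Ind rel (nbr_set F rel R) - {{}}"
proof -
  have ind: "\<And>r. r < length (R # S # \<phi>) \<Longrightarrow> (R # S # \<phi>) ! r \<in> Ind rel F"
    and nbr: "\<And>r. r + 1 < length (R # S # \<phi>) \<Longrightarrow>
                (R # S # \<phi>) ! (r + 1) \<subseteq> nbr_set F rel ((R # S # \<phi>) ! r)"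
    and ne: "\<And>r. 1 \<le> r \<Longrightarrow> r < length (R # S # \<phi>) \<Longrightarrow> (R # S # \<phi>) ! r \<noteq> {}"
    using assms by (auto simp: strongly_stable_def)
  show "strongly_stable F rel (S # \<phi>)"
    unfolding strongly_stable_def
  proof (intro conjI allI impI)
    fix r
    show "r < length (S # \<phi>) \<Longrightarrow> (S # \<phi>) ! r \<in> Ind rel F" using ind[of "Suc r"] by simp
    show "r + 1 < length (S # \<phi>) \<Longrightarrow> (S # \<phi>) ! (r + 1) \<subseteq> nbr_set F rel ((S # \<phi>) ! r)"
      using nbr[of "Suc r"] by simp
    show "1 \<le> r \<and> r < length (S # \<phi>) \<Longrightarrow> (S # \<phi>) ! r \<noteq> {}" using ne[of "Suc r"] by simp
  qed simp
  show "S \<in> Ind rel (nbr_set F rel R) - {{}}"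
    using ind[of 1] nbr[of 0] ne[of 1] by (auto simp: Ind_def)
qed

lemma seq_weight_nonneg:
  assumes "\<forall>f\<in>F. 0 \<le> lam f" and "set \<phi> \<subseteq> Pow F"
  shows "0 \<le> seq_weight lam \<phi>"
  unfolding seq_weight_def
  using assms by (intro prod_list_nonneg) (auto intro!: prod_nonneg)

lemma seq_weight_Cons: "seq_weight lam (R # \<phi>) = (\<Prod>f\<in>R. lam f) * seq_weight lam \<phi>"
  by (simp add: seq_weight_def)

definition Stab_len ::
  "'a set \<Rightarrow> ('a \<Rightarrow> 'a \<Rightarrow> bool) \<Rightarrow> 'a set \<Rightarrow> nat \<Rightarrow> nat \<Rightarrow> 'a set list set" where
  "Stab_len F rel R t k = {\<phi> \<in> Stab F rel R t. length \<phi> \<le> k}"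

lemma finite_Stab_len: "finite F \<Longrightarrow> finite (Stab_len F rel R t k)"
  by (rule finite_subset[OF _ finite_lists_length_le[of "Pow F" k]])
     (auto simp: Stab_len_def Stab_def dest: strongly_stable_Ind Ind_subset)

lemma Stab_len_set_subset_Pow: "\<phi> \<in> Stab_len F rel R t k \<Longrightarrow> set \<phi> \<subseteq> Pow F"
  by (auto simp: Stab_len_def Stab_def dest: strongly_stable_Ind Ind_subset)

lemma Stab_len_Suc_subset:
  "Stab_len F rel R t (Suc k) \<subseteq> (if t \<le> card R then {[R]} else {}) \<union>
     (\<lambda>(S, \<phi>). R # \<phi>) ` (SIGMA S : Ind rel (nbr_set F rel R) - {{}}. Stab_len F rel S (t - card R) k)"
proof
  fix \<phi> assume \<phi>: "\<phi> \<in> Stab_len F rel R t (Suc k)"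
  then obtain \<psi> where \<phi>_eq: "\<phi> = R # \<psi>"
    by (cases \<phi>) (auto simp: Stab_len_def Stab_def strongly_stable_def)
  show "\<phi> \<in> (if t \<le> card R then {[R]} else {}) \<union>
     (\<lambda>(S, \<phi>). R # \<phi>) ` (SIGMA S : Ind rel (nbr_set F rel R) - {{}}. Stab_len F rel S (t - card R) k)"
  proof (cases \<psi>)
    case Nil
    then show ?thesis using \<phi> \<phi>_eq by (simp add: Stab_len_def Stab_def seq_size_def)
  next
    case (Cons S \<psi>')
    with \<phi> \<phi>_eq have "\<psi> \<in> Stab_len F rel S (t - card R) k"
      using strongly_stable_Cons_Cons(1) by (fastforce simp: Stab_len_def Stab_def seq_size_def)
    moreover have "S \<in> Ind rel (nbr_set F rel R) - {{}}"
      using \<phi> \<phi>_eq Cons strongly_stable_Cons_Cons(2)[of F rel R S \<psi>']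
      by (simp add: Stab_len_def Stab_def)
    ultimately show ?thesis using \<phi>_eq Cons by auto
  qed
qed

lemma sum_Stab_len_Suc_le:
  assumes fin: "finite F" and lam: "\<forall>f\<in>F. 0 \<le> lam f" and R: "R \<in> Ind rel F"
  shows "(\<Sum>\<phi>\<in>Stab_len F rel R t (Suc k). seq_weight lam \<phi>)
    \<le> (\<Prod>f\<in>R. lam f) * ((if t \<le> card R then 1 else 0) +
         (\<Sum>S\<in>Ind rel (nbr_set F rel R) - {{}}. \<Sum>\<phi>\<in>Stab_len F rel S (t - card R) k. seq_weight lam \<phi>))"
proof -
  define A where "A = (if t \<le> card R then {[R]} else {})"
  define SG where "SG = (SIGMA S : Ind rel (nbr_set F rel R) - {{}}. Stab_len F rel S (t - card R) k)"
  define g where "g = (\<lambda>(S :: 'a set, \<phi> :: 'a set list). R # \<phi>)"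
  have fin_SG: "finite SG"
    unfolding SG_def using fin by (simp add: finite_Ind_nbr_set finite_Stab_len)
  have set_Pow: "set \<phi> \<subseteq> Pow F" if "\<phi> \<in> A \<union> g ` SG" for \<phi>
  proof -
    from that consider "\<phi> = [R]" | S \<psi> where "\<phi> = R # \<psi>" "\<psi> \<in> Stab_len F rel S (t - card R) k"
      by (auto simp: A_def SG_def g_def split: if_splits)
    then show ?thesis
      using Ind_subset[OF R] by cases (auto dest!: Stab_len_set_subset_Pow)
  qed
  have weight_nonneg: "0 \<le> seq_weight lam \<phi>" if "\<phi> \<in> A \<union> g ` SG" for \<phi>
    by (rule seq_weight_nonneg[OF lam set_Pow[OF that]])
  have disj: "A \<inter> g ` SG = {}"
    by (auto simp: A_def SG_def g_def Stab_len_def Stab_def strongly_stable_def)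
  have inj: "inj_on g SG"
    by (auto simp: inj_on_def g_def SG_def Stab_len_def Stab_def)
  have "(\<Sum>\<phi>\<in>Stab_len F rel R t (Suc k). seq_weight lam \<phi>) \<le> (\<Sum>\<phi>\<in>A \<union> g ` SG. seq_weight lam \<phi>)"
    using fin_SG weight_nonneg Stab_len_Suc_subset[of F rel R t k]
    unfolding A_def SG_def g_def by (intro sum_mono2) auto
  also have "\<dots> = (\<Sum>\<phi>\<in>A. seq_weight lam \<phi>) + (\<Sum>(S, \<phi>)\<in>SG. seq_weight lam (R # \<phi>))"
    using fin_SG disj
    by (simp add: A_def sum.union_disjoint sum.reindex[OF inj]) (simp add: g_def case_prod_unfold)
  also have "\<dots> = (\<Prod>f\<in>R. lam f) * ((if t \<le> card R then 1 else 0) +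
         (\<Sum>S\<in>Ind rel (nbr_set F rel R) - {{}}. \<Sum>\<phi>\<in>Stab_len F rel S (t - card R) k. seq_weight lam \<phi>))"
    using fin unfolding SG_def
    by (subst sum.Sigma[symmetric])
       (auto simp: A_def seq_weight_Cons seq_weight_def sum_distrib_left distrib_left
          finite_Ind_nbr_set finite_Stab_len)
  finally show ?thesis .
qed

definition Stab_majorant ::
  "'a set \<Rightarrow> ('a \<Rightarrow> 'a \<Rightarrow> bool) \<Rightarrow> ('a \<Rightarrow> real) \<Rightarrow> real \<Rightarrow> ('a set \<Rightarrow> real) \<Rightarrow> bool" where
  "Stab_majorant F rel lam \<theta> M \<longleftrightarrow> M {} = 1 \<and> (\<forall>S\<in>Ind rel F. 0 \<le> M S) \<and>
     (\<forall>R\<in>Ind rel F. (\<Prod>f\<in>R. lam f) * (\<Sum>S\<in>Ind rel (nbr_set F rel R). M S) \<le> \<theta> ^ card R * M R)"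

lemma sum_Stab_len_le:
  assumes M: "Stab_majorant F rel lam \<theta> M"
    and fin: "finite F" and lam: "\<forall>f\<in>F. 0 \<le> lam f" and \<theta>: "0 \<le> \<theta>" "\<theta> \<le> 1"
    and R: "R \<in> Ind rel F"
  shows "(\<Sum>\<phi>\<in>Stab_len F rel R t k. seq_weight lam \<phi>) \<le> M R * \<theta> ^ t"
  using R
proof (induction k arbitrary: R t)
  case 0
  have "Stab_len F rel R t 0 = {}"
    by (auto simp: Stab_len_def Stab_def strongly_stable_def)
  then show ?case using M 0 \<theta> by (simp add: Stab_majorant_def)
next
  case (Suc k)
  define I where "I = Ind rel (nbr_set F rel R) - {{}}"
  define L where "L = (\<Prod>f\<in>R. lam f)"
  have I_Ind: "I \<subseteq> Ind rel F"
    unfolding I_def using Ind_mono[OF nbr_set_subset] by blast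
  have L_nonneg: "0 \<le> L"
    unfolding L_def using lam Ind_subset[OF Suc.prems] by (intro prod_nonneg) auto
  have M_nonneg: "0 \<le> M S" if "S \<in> Ind rel F" for S
    using M that by (simp add: Stab_majorant_def)
  have sum_Ind_nbr_set: "(\<Sum>S\<in>Ind rel (nbr_set F rel R). M S) = 1 + (\<Sum>S\<in>I. M S)"
    using M unfolding I_def Stab_majorant_def
    by (simp add: sum.remove[OF finite_Ind_nbr_set[OF fin] empty_in_Ind])
  have indicator_le: "(if t \<le> card R then 1 else 0) \<le> \<theta> ^ (t - card R)"
    using \<theta> by simp
  have "(\<Sum>\<phi>\<in>Stab_len F rel R t (Suc k). seq_weight lam \<phi>)
      \<le> L * ((if t \<le> card R then 1 else 0) + (\<Sum>S\<in>I. \<Sum>\<phi>\<in>Stab_len F rel S (t - card R) k. seq_weight lam \<phi>))"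
    unfolding I_def L_def by (rule sum_Stab_len_Suc_le[OF fin lam Suc.prems])
  also have "\<dots> \<le> L * (\<theta> ^ (t - card R) + (\<Sum>S\<in>I. M S * \<theta> ^ (t - card R)))"
    using Suc.IH I_Ind indicator_le L_nonneg by (intro mult_left_mono add_mono sum_mono) auto
  also have "\<dots> = L * (\<Sum>S\<in>Ind rel (nbr_set F rel R). M S) * \<theta> ^ (t - card R)"
    by (simp add: sum_Ind_nbr_set sum_distrib_right algebra_simps)
  also have "\<dots> \<le> \<theta> ^ card R * M R * \<theta> ^ (t - card R)"
    using M Suc.prems \<theta> unfolding L_def Stab_majorant_def by (intro mult_right_mono) auto
  also have "\<dots> = M R * \<theta> ^ (card R + (t - card R))"
    by (simp add: power_add)
  also have "\<dots> \<le> M R * \<theta> ^ t"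
    using M_nonneg[OF Suc.prems] \<theta> by (intro mult_left_mono power_decreasing) auto
  finally show ?case .
qed

lemma infsum_Stab_le:
  assumes M: "Stab_majorant F rel lam \<theta> M"
    and fin: "finite F" and lam: "\<forall>f\<in>F. 0 \<le> lam f" and \<theta>: "0 \<le> \<theta>" "\<theta> \<le> 1"
    and R: "R \<in> Ind rel F"
  shows "seq_weight lam summable_on Stab F rel R t"
    and "(\<Sum>\<^sub>\<infinity>\<phi>\<in>Stab F rel R t. seq_weight lam \<phi>) \<le> M R * \<theta> ^ t"
proof -
  have nonneg: "0 \<le> seq_weight lam \<phi>" if "\<phi> \<in> Stab F rel R t" for \<phi>
    using that lam seq_weight_nonneg Stab_len_set_subset_Pow[of \<phi> F rel R t "length \<phi>"]
    by (simp add: Stab_len_def)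
  have finite_sums_le: "sum (seq_weight lam) X \<le> M R * \<theta> ^ t"
    if X: "finite X" "X \<subseteq> Stab F rel R t" for X
  proof -
    have "X \<subseteq> Stab_len F rel R t (\<Sum>\<phi>\<in>X. length \<phi>)"
      using X by (auto simp: Stab_len_def intro: member_le_sum)
    then have "sum (seq_weight lam) X \<le> (\<Sum>\<phi>\<in>Stab_len F rel R t (\<Sum>\<phi>\<in>X. length \<phi>). seq_weight lam \<phi>)"
      using finite_Stab_len[OF fin] nonneg by (intro sum_mono2) (auto simp: Stab_len_def)
    also have "\<dots> \<le> M R * \<theta> ^ t"
      by (rule sum_Stab_len_le[OF M fin lam \<theta> R])
    finally show ?thesis .
  qed
  show summable: "seq_weight lam summable_on Stab F rel R t"
    using nonneg finite_sums_le by (intro nonneg_bdd_above_summable_on) (auto simp: bdd_above_def)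
  show "(\<Sum>\<^sub>\<infinity>\<phi>\<in>Stab F rel R t. seq_weight lam \<phi>) \<le> M R * \<theta> ^ t"
    using infsum_le_finite_sums[OF summable finite_sums_le] .
qed

lemma sum_Ind_Un_le:
  fixes mu :: "'a \<Rightarrow> real"
  assumes fin: "finite X" "finite Y" and mu: "\<forall>g\<in>X \<union> Y. 0 \<le> mu g"
  shows "(\<Sum>S\<in>Ind rel (X \<union> Y). \<Prod>g\<in>S. mu g)
    \<le> (\<Sum>A\<in>Ind rel X. \<Prod>g\<in>A. mu g) * (\<Sum>B\<in>Ind rel Y. \<Prod>g\<in>B. mu g)"
proof -
  define split where "split = (\<lambda>S. (S \<inter> X, S - X))"
  have inj: "inj_on split (Ind rel (X \<union> Y))"
    unfolding split_def inj_on_def by auto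
  have split_Ind: "split ` Ind rel (X \<union> Y) \<subseteq> Ind rel X \<times> Ind rel Y"
    unfolding split_def Ind_def independent_def by auto
  have "(\<Sum>S\<in>Ind rel (X \<union> Y). \<Prod>g\<in>S. mu g)
      = (\<Sum>S\<in>Ind rel (X \<union> Y). (\<Prod>g\<in>fst (split S). mu g) * (\<Prod>g\<in>snd (split S). mu g))"
  proof (rule sum.cong[OF refl])
    fix S assume "S \<in> Ind rel (X \<union> Y)"
    then have "finite S" using fin by (auto dest: Ind_subset intro: finite_subset)
    then show "(\<Prod>g\<in>S. mu g) = (\<Prod>g\<in>fst (split S). mu g) * (\<Prod>g\<in>snd (split S). mu g)"
      unfolding split_def by (simp add: prod.Int_Diff)
  qed
  also have "\<dots> = (\<Sum>(A, B)\<in>split ` Ind rel (X \<union> Y). (\<Prod>g\<in>A. mu g) * (\<Prod>g\<in>B. mu g))"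
    by (simp add: sum.reindex[OF inj] case_prod_unfold)
  also have "\<dots> \<le> (\<Sum>(A, B)\<in>Ind rel X \<times> Ind rel Y. (\<Prod>g\<in>A. mu g) * (\<Prod>g\<in>B. mu g))"
    using split_Ind fin mu
    by (intro sum_mono2) (auto simp: finite_Ind dest!: Ind_subset intro!: mult_nonneg_nonneg prod_nonneg)
  also have "\<dots> = (\<Sum>A\<in>Ind rel X. \<Prod>g\<in>A. mu g) * (\<Sum>B\<in>Ind rel Y. \<Prod>g\<in>B. mu g)"
    by (simp add: sum_product sum.cartesian_product)
  finally show ?thesis .
qed

lemma sum_Ind_nbr_set_le_prod:
  fixes mu :: "'a \<Rightarrow> real"
  assumes fin: "finite F" and mu: "\<forall>g\<in>F. 0 \<le> mu g" and "finite R"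
  shows "(\<Sum>S\<in>Ind rel (nbr_set F rel R). \<Prod>g\<in>S. mu g) \<le> (\<Prod>f\<in>R. \<Sum>S\<in>Ind rel (nbr F rel f). \<Prod>g\<in>S. mu g)"
  using \<open>finite R\<close>
proof (induction R rule: finite_induct)
  case empty
  then show ?case by (simp add: nbr_set_def Ind_empty)
next
  case (insert f R)
  have "(\<Sum>S\<in>Ind rel (nbr_set F rel (insert f R)). \<Prod>g\<in>S. mu g)
     \<le> (\<Sum>S\<in>Ind rel (nbr F rel f). \<Prod>g\<in>S. mu g) * (\<Sum>S\<in>Ind rel (nbr_set F rel R). \<Prod>g\<in>S. mu g)"
    unfolding nbr_set_insert using fin mu nbr_subset[of F rel f] nbr_set_subset[of F rel R]
    by (intro sum_Ind_Un_le) (auto intro: finite_subset)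
  also have "\<dots> \<le> (\<Sum>S\<in>Ind rel (nbr F rel f). \<Prod>g\<in>S. mu g) * (\<Prod>f\<in>R. \<Sum>S\<in>Ind rel (nbr F rel f). \<Prod>g\<in>S. mu g)"
    using insert.IH mu nbr_subset[of F rel f]
    by (intro mult_left_mono sum_nonneg prod_nonneg) (auto dest!: Ind_subset)
  finally show ?case using insert by simp
qed

lemma Stab_majorant_prod:
  fixes lam mu :: "'a \<Rightarrow> real"
  assumes fin: "finite F" and pos: "\<forall>f\<in>F. 0 \<le> lam f \<and> 0 < mu f"
    and cond: "\<forall>f\<in>F. lam f / mu f * (\<Sum>S\<in>Ind rel (nbr F rel f). \<Prod>g\<in>S. mu g) \<le> \<theta>"
  shows "Stab_majorant F rel lam \<theta> (\<lambda>S. \<Prod>g\<in>S. mu g)"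
  unfolding Stab_majorant_def
proof (intro conjI ballI)
  show "0 \<le> (\<Prod>g\<in>S. mu g)" if "S \<in> Ind rel F" for S
    using that pos by (intro prod_nonneg) (auto intro: less_imp_le dest!: Ind_subset)
next
  fix R assume R: "R \<in> Ind rel F"
  define s where "s f = (\<Sum>S\<in>Ind rel (nbr F rel f). \<Prod>g\<in>S. mu g)" for f
  have RF: "R \<subseteq> F" using R by (rule Ind_subset)
  have lam_s_le: "0 \<le> lam f * s f \<and> lam f * s f \<le> \<theta> * mu f" if "f \<in> R" for f
  proof
    have f: "f \<in> F" using that RF by auto
    show "0 \<le> lam f * s f"
      unfolding s_def using pos f nbr_subset[of F rel f]
      by (intro mult_nonneg_nonneg sum_nonneg prod_nonneg) (auto intro: less_imp_le dest!: Ind_subset)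
    show "lam f * s f \<le> \<theta> * mu f"
      using cond pos f by (simp add: s_def field_simps)
  qed
  have "(\<Prod>f\<in>R. lam f) * (\<Sum>S\<in>Ind rel (nbr_set F rel R). \<Prod>g\<in>S. mu g) \<le> (\<Prod>f\<in>R. lam f) * (\<Prod>f\<in>R. s f)"
    unfolding s_def using pos RF fin
    by (intro mult_left_mono sum_Ind_nbr_set_le_prod prod_nonneg) (auto intro: less_imp_le finite_subset)
  also have "\<dots> = (\<Prod>f\<in>R. lam f * s f)"
    by (simp add: prod.distrib)
  also have "\<dots> \<le> (\<Prod>f\<in>R. \<theta> * mu f)"
    using lam_s_le by (rule prod_mono)
  also have "\<dots> = \<theta> ^ card R * (\<Prod>g\<in>R. mu g)"
    by (simp add: prod.distrib)
  finally show "(\<Prod>f\<in>R. lam f) * (\<Sum>S\<in>Ind rel (nbr_set F rel R). \<Prod>g\<in>S. mu g) \<le> \<theta> ^ card R * (\<Prod>g\<in>R. mu g)" .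
qed simp

lemma sum_Pow_neg_one_power_card:
  assumes "finite B"
  shows "(\<Sum>S\<in>Pow B. (-1 :: 'b :: ring_1) ^ card S) = (if B = {} then 1 else 0)"
proof (cases "B = {}")
  case False
  then have "card {T. T \<subseteq> B \<and> {} \<subseteq> T \<and> even (card T)} = card {T. T \<subseteq> B \<and> {} \<subseteq> T \<and> odd (card T)}"
    using assms by (intro card_subsupersets_even_odd) auto
  then show ?thesis
    using assms False by (simp add: Pow_def sum_alternating_cancels)
qed simp

lemma sum_Ind_q_poly:
  fixes p :: "'a \<Rightarrow> real"
  assumes fin: "finite F" "finite X"
  shows "(\<Sum>S\<in>Ind rel X. q_poly F rel p S) = (\<Sum>I\<in>{I\<in>Ind rel F. I \<inter> X = {}}. (-1) ^ card I * (\<Prod>f\<in>I. p f))"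
proof -
  have "(\<Sum>S\<in>Ind rel X. q_poly F rel p S) =
     (\<Sum>I\<in>Ind rel F. \<Sum>S\<in>{S\<in>Ind rel X. S \<subseteq> I}. (-1) ^ (card I - card S) * (\<Prod>f\<in>I. p f))"
    unfolding q_poly_def using fin by (intro sum.swap_restrict finite_Ind)
  also have "\<dots> = (\<Sum>I\<in>Ind rel F. if I \<inter> X = {} then (-1) ^ card I * (\<Prod>f\<in>I. p f) else 0)"
  proof (rule sum.cong[OF refl])
    fix I assume I: "I \<in> Ind rel F"
    have fin_I: "finite I" using I fin by (auto dest: Ind_subset intro: finite_subset)
    have subsets: "{S\<in>Ind rel X. S \<subseteq> I} = Pow (I \<inter> X)"
      using I by (auto simp: Ind_def independent_def)
    have "(\<Sum>S\<in>{S\<in>Ind rel X. S \<subseteq> I}. (-1) ^ (card I - card S) * (\<Prod>f\<in>I. p f))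
       = (-1) ^ card I * (\<Prod>f\<in>I. p f) * (\<Sum>S\<in>Pow (I \<inter> X). (-1) ^ card S)"
      unfolding subsets sum_distrib_left using fin_I
      by (intro sum.cong) (auto simp: card_mono power_add
          simp flip: neg_one_power_add_eq_neg_one_power_diff)
    also have "\<dots> = (if I \<inter> X = {} then (-1) ^ card I * (\<Prod>f\<in>I. p f) else 0)"
      using fin_I by (simp add: sum_Pow_neg_one_power_card del: Pow_Int_eq)
    finally show "(\<Sum>S\<in>{S\<in>Ind rel X. S \<subseteq> I}. (-1) ^ (card I - card S) * (\<Prod>f\<in>I. p f)) = \<dots>" .
  qed
  also have "\<dots> = (\<Sum>I\<in>{I\<in>Ind rel F. I \<inter> X = {}}. (-1) ^ card I * (\<Prod>f\<in>I. p f))"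
    using fin by (simp add: sum.inter_filter finite_Ind)
  finally show ?thesis .
qed

lemma independent_Un:
  "independent rel (A \<union> B) \<longleftrightarrow> independent rel A \<and> independent rel B \<and>
     (\<forall>a\<in>A. \<forall>b\<in>B. a \<noteq> b \<longrightarrow> \<not> rel a b \<and> \<not> rel b a)"
  by (auto simp: independent_def)

lemma Ind_supersets_eq_image:
  assumes sym: "\<forall>f\<in>F. \<forall>g\<in>F. rel f g = rel g f" and R: "R \<in> Ind rel F"
  shows "{I \<in> Ind rel F. R \<subseteq> I} = (\<lambda>I. I \<union> R) ` {I \<in> Ind rel F. I \<inter> (R \<union> nbr_set F rel R) = {}}"
proof
  show "(\<lambda>I. I \<union> R) ` {I \<in> Ind rel F. I \<inter> (R \<union> nbr_set F rel R) = {}} \<subseteq> {I \<in> Ind rel F. R \<subseteq> I}"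
  proof (rule image_subsetI)
    fix I assume "I \<in> {I \<in> Ind rel F. I \<inter> (R \<union> nbr_set F rel R) = {}}"
    then have I: "I \<in> Ind rel F" "I \<inter> (R \<union> nbr_set F rel R) = {}" by auto
    have "\<not> rel r j \<and> \<not> rel j r" if "r \<in> R" "j \<in> I" for r j
    proof -
      have "r \<in> F" "j \<in> F" using that I R by (auto dest: Ind_subset)
      then show ?thesis using that I sym by (auto simp: nbr_set_def nbr_def)
    qed
    then have "independent rel (I \<union> R)"
      using I R by (auto simp: independent_Un Ind_def)
    then show "I \<union> R \<in> {I \<in> Ind rel F. R \<subseteq> I}" using I R by (simp add: Ind_def)
  qed
  show "{I \<in> Ind rel F. R \<subseteq> I} \<subseteq> (\<lambda>I. I \<union> R) ` {I \<in> Ind rel F. I \<inter> (R \<union> nbr_set F rel R) = {}}"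
  proof clarify
    fix I assume I: "I \<in> Ind rel F" "R \<subseteq> I"
    have "j \<notin> nbr_set F rel R" if "j \<in> I - R" for j
      using that I by (fastforce simp: Ind_def independent_def nbr_set_def nbr_def)
    then have "I - R \<in> {I \<in> Ind rel F. I \<inter> (R \<union> nbr_set F rel R) = {}}"
      using I by (auto simp: Ind_def independent_def)
    moreover have "I = (I - R) \<union> R" using I by auto
    ultimately show "I \<in> (\<lambda>I. I \<union> R) ` {I \<in> Ind rel F. I \<inter> (R \<union> nbr_set F rel R) = {}}" by blast
  qed
qed

lemma q_poly_Ind_eq:
  fixes p :: "'a \<Rightarrow> real"
  assumes fin: "finite F" and sym: "\<forall>f\<in>F. \<forall>g\<in>F. rel f g = rel g f" and R: "R \<in> Ind rel F"
  shows "q_poly F rel p R = (\<Prod>f\<in>R. p f) * (\<Sum>S\<in>Ind rel (R \<union> nbr_set F rel R). q_poly F rel p S)"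
proof -
  define J where "J = {I \<in> Ind rel F. I \<inter> (R \<union> nbr_set F rel R) = {}}"
  have fin_R: "finite R" using R fin by (auto dest: Ind_subset intro: finite_subset)
  have inj: "inj_on (\<lambda>I. I \<union> R) J" unfolding J_def inj_on_def by blast
  have "q_poly F rel p R = (\<Sum>I\<in>J. (-1) ^ (card (I \<union> R) - card R) * (\<Prod>f\<in>I \<union> R. p f))"
    unfolding q_poly_def Ind_supersets_eq_image[OF sym R] J_def[symmetric] sum.reindex[OF inj] by simp
  also have "\<dots> = (\<Prod>f\<in>R. p f) * (\<Sum>I\<in>J. (-1) ^ card I * (\<Prod>f\<in>I. p f))"
    unfolding sum_distrib_left
  proof (intro sum.cong refl)
    fix I assume "I \<in> J"
    then have "finite I" "I \<inter> R = {}"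
      using fin by (auto simp: J_def dest: Ind_subset intro: finite_subset)
    then show "(-1) ^ (card (I \<union> R) - card R) * (\<Prod>f\<in>I \<union> R. p f) = (\<Prod>f\<in>R. p f) * ((-1) ^ card I * (\<Prod>f\<in>I. p f))"
      using fin_R by (simp add: card_Un_disjoint prod.union_disjoint)
  qed
  also have "\<dots> = (\<Prod>f\<in>R. p f) * (\<Sum>S\<in>Ind rel (R \<union> nbr_set F rel R). q_poly F rel p S)"
    using fin fin_R by (simp add: J_def sum_Ind_q_poly finite_subset[OF nbr_set_subset])
  finally show ?thesis .
qed

lemma Stab_majorant_q_poly:
  fixes p lam :: "'a \<Rightarrow> real"
  assumes fin: "finite F" and sym: "\<forall>f\<in>F. \<forall>g\<in>F. rel f g = rel g f"
    and q_nonneg: "\<forall>S. S \<subseteq> F \<longrightarrow> 0 \<le> q_poly F rel p S" and q_empty: "0 < q_poly F rel p {}"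
    and lam: "\<forall>f\<in>F. 0 \<le> lam f \<and> lam f \<le> \<theta> * p f" and \<theta>: "0 < \<theta>"
  shows "Stab_majorant F rel lam \<theta> (\<lambda>S. q_poly F rel p S / q_poly F rel p {})"
  unfolding Stab_majorant_def
proof (intro conjI ballI)
  show "0 \<le> q_poly F rel p S / q_poly F rel p {}" if "S \<in> Ind rel F" for S
    using that q_nonneg q_empty by (simp add: Ind_subset)
next
  fix R assume R: "R \<in> Ind rel F"
  let ?q = "q_poly F rel p"
  have RF: "R \<subseteq> F" using R by (rule Ind_subset)
  have nbhd_F: "R \<union> nbr_set F rel R \<subseteq> F" using RF nbr_set_subset[of F rel R] by blast
  have q_nonneg_Ind: "0 \<le> ?q S" if "S \<in> Ind rel (R \<union> nbr_set F rel R)" for S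
    using that nbhd_F q_nonneg by (meson Ind_subset order_trans)
  have lam_le: "0 \<le> lam f \<and> lam f \<le> \<theta> * p f" if "f \<in> R" for f
    using lam that RF by blast
  have prod_lam_le: "(\<Prod>f\<in>R. lam f) \<le> \<theta> ^ card R * (\<Prod>f\<in>R. p f)"
    using prod_mono[OF lam_le] by (simp add: prod.distrib)
  have "0 \<le> (\<Prod>f\<in>R. lam f)"
    using lam_le by (intro prod_nonneg) blast
  then have prod_p_nonneg: "0 \<le> \<theta> ^ card R * (\<Prod>f\<in>R. p f)"
    using prod_lam_le by linarith
  have sum_le: "(\<Sum>S\<in>Ind rel (nbr_set F rel R). ?q S) \<le> (\<Sum>S\<in>Ind rel (R \<union> nbr_set F rel R). ?q S)"
    using q_nonneg_Ind finite_subset[OF nbhd_F fin]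
    by (intro sum_mono2 finite_Ind Ind_mono) auto
  have sum_nonneg: "0 \<le> (\<Sum>S\<in>Ind rel (nbr_set F rel R). ?q S)"
    using q_nonneg_Ind Ind_mono[of "nbr_set F rel R" "R \<union> nbr_set F rel R"] by (intro sum_nonneg) auto
  have "(\<Prod>f\<in>R. lam f) * (\<Sum>S\<in>Ind rel (nbr_set F rel R). ?q S)
      \<le> \<theta> ^ card R * (\<Prod>f\<in>R. p f) * (\<Sum>S\<in>Ind rel (R \<union> nbr_set F rel R). ?q S)"
    using prod_lam_le sum_le prod_p_nonneg sum_nonneg by (rule mult_mono)
  also have "\<dots> = \<theta> ^ card R * ?q R"
    by (simp add: q_poly_Ind_eq[OF fin sym R])
  finally show "(\<Prod>f\<in>R. lam f) * (\<Sum>S\<in>Ind rel (nbr_set F rel R). ?q S / ?q {}) \<le> \<theta> ^ card R * (?q R / ?q {})"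
    using q_empty by (simp add: sum_divide_distrib[symmetric] divide_right_mono)
qed (use q_empty in simp)

lemma flaw_setting_finite: "flaw_setting \<Omega> F \<rho> \<omega> \<Longrightarrow> finite F"
  by (rule finite_subset[of F "Pow \<Omega>"]) (auto simp: flaw_setting_def)

lemma shearer_condition_nonneg:
  assumes setting: "flaw_setting \<Omega> F \<rho> \<omega>" and shearer: "shearer_condition \<Omega> F rel \<rho> \<omega> p lam \<theta>"
    and f: "f \<in> F"
  shows "0 \<le> lam f"
proof -
  \<comment> \<open>\<open>\<Omega>\<close> is nonempty since \<open>\<omega>\<close> sums to 1 over it\<close>
  obtain \<sigma>' where \<sigma>': "\<sigma>' \<in> \<Omega>"
    using setting by (force simp: flaw_setting_def)
  have "0 \<le> (\<Sum>\<sigma> \<in> {\<sigma> \<in> f. \<sigma>' \<in> supp_A \<Omega> \<rho> f \<sigma>}. \<rho> f \<sigma> \<sigma>' * \<omega> \<sigma> / \<omega> \<sigma>')"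
    using setting f \<sigma>'
    by (intro sum_nonneg divide_nonneg_nonneg mult_nonneg_nonneg)
       (auto simp: flaw_setting_def less_imp_le subset_iff)
  also have "\<dots> \<le> lam f"
    using shearer f \<sigma>' by (simp add: shearer_condition_def)
  finally show ?thesis .
qed

theorem theorem7:
  shows
  "(\<forall>(F :: 'a set) rel (lam :: 'a \<Rightarrow> real) (mu :: 'a \<Rightarrow> real) (\<theta> :: real).
      finite F \<and> (\<forall>f\<in>F. \<forall>g\<in>F. rel f g = rel g f) \<and>
      (\<forall>f\<in>F. lam f \<ge> 0 \<and> mu f > 0) \<and> 0 < \<theta> \<and> \<theta> < 1 \<and>
      (\<forall>f\<in>F. lam f / mu f * (\<Sum>S\<in>Ind rel (nbr F rel f). \<Prod>g\<in>S. mu g) \<le> \<theta>)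
      \<longrightarrow> (\<forall>R\<in>Ind rel F. \<forall>t::nat.
             (seq_weight lam) summable_on (Stab F rel R t) \<and>
             (\<Sum>\<^sub>\<infinity>\<phi>\<in>Stab F rel R t. seq_weight lam \<phi>) \<le> (\<Prod>g\<in>R. mu g) * \<theta> ^ t))
   \<and>
   (\<forall>(\<Omega> :: 'w set) (F :: 'w set set) rel \<rho> \<omega> p lam (\<theta> :: real).
      flaw_setting \<Omega> F \<rho> \<omega> \<and> (\<forall>f\<in>F. \<forall>g\<in>F. rel f g = rel g f) \<and>
      shearer_condition \<Omega> F rel \<rho> \<omega> p lam \<theta>
      \<longrightarrow> (\<forall>R\<in>Ind rel F. \<forall>t::nat.
             (seq_weight lam) summable_on (Stab F rel R t) \<and>
             (\<Sum>\<^sub>\<infinity>\<phi>\<in>Stab F rel R t. seq_weight lam \<phi>)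
               \<le> q_poly F rel p R / q_poly F rel p {} * \<theta> ^ t))"
proof (rule conjI; intro allI impI ballI)
  fix F :: "'a set" and rel lam mu and \<theta> :: real and R t
  assume "finite F \<and> (\<forall>f\<in>F. \<forall>g\<in>F. rel f g = rel g f) \<and>
      (\<forall>f\<in>F. lam f \<ge> 0 \<and> mu f > 0) \<and> 0 < \<theta> \<and> \<theta> < 1 \<and>
      (\<forall>f\<in>F. lam f / mu f * (\<Sum>S\<in>Ind rel (nbr F rel f). \<Prod>g\<in>S. mu g) \<le> \<theta>)"
    and R: "R \<in> Ind rel F"
  then have fin: "finite F" and pos: "\<forall>f\<in>F. 0 \<le> lam f \<and> 0 < mu f" and \<theta>: "0 \<le> \<theta>" "\<theta> \<le> 1"
    and M: "Stab_majorant F rel lam \<theta> (\<lambda>S. \<Prod>g\<in>S. mu g)"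
    by (auto intro: Stab_majorant_prod)
  show "seq_weight lam summable_on Stab F rel R t \<and>
      (\<Sum>\<^sub>\<infinity>\<phi>\<in>Stab F rel R t. seq_weight lam \<phi>) \<le> (\<Prod>g\<in>R. mu g) * \<theta> ^ t"
    using infsum_Stab_le[OF M fin _ \<theta> R] pos by auto
next
  fix \<Omega> :: "'w set" and F rel \<rho> \<omega> p lam and \<theta> :: real and R t
  assume "flaw_setting \<Omega> F \<rho> \<omega> \<and> (\<forall>f\<in>F. \<forall>g\<in>F. rel f g = rel g f) \<and>
      shearer_condition \<Omega> F rel \<rho> \<omega> p lam \<theta>"
    and R: "R \<in> Ind rel F"
  then have setting: "flaw_setting \<Omega> F \<rho> \<omega>" and sym: "\<forall>f\<in>F. \<forall>g\<in>F. rel f g = rel g f"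
    and shearer: "shearer_condition \<Omega> F rel \<rho> \<omega> p lam \<theta>" by auto
  have fin: "finite F" using setting by (rule flaw_setting_finite)
  have lam: "\<forall>f\<in>F. 0 \<le> lam f" using shearer_condition_nonneg[OF setting shearer] by blast
  have \<theta>: "0 < \<theta>" "\<theta> < 1" using shearer by (auto simp: shearer_condition_def)
  have M: "Stab_majorant F rel lam \<theta> (\<lambda>S. q_poly F rel p S / q_poly F rel p {})"
    using shearer lam \<theta>
    by (intro Stab_majorant_q_poly[OF fin sym]) (auto simp: shearer_condition_def)
  show "seq_weight lam summable_on Stab F rel R t \<and>
      (\<Sum>\<^sub>\<infinity>\<phi>\<in>Stab F rel R t. seq_weight lam \<phi>) \<le> q_poly F rel p R / q_poly F rel p {} * \<theta> ^ t"
    using infsum_Stab_le[OF M fin lam _ _ R] \<theta> by auto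
qed

end
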